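(* Let $C$ be an unoriented resolution configuration with starting circles $\{x_i\}$ and ending circles $\{y_j\}$, and let $F_C:V_0(C)\to V_1(C)$ be an associated map satisfying the filtration rule and the naturality rule. Define $F_{m(C^* )}:V_0(m(C^* ))\to V_1(m(C^* ))$ on the mirror of the dual configuration by the duality rule, i.e. for monomials $a\in V_0(C)$, $b\in V_1(C)$ the coefficient of $a^*$ in $F_{m(C^* )}(b^* )$ is the coefficient of $b$ in $F_C(a)$. If $C$ is self-dual, i.e. there is an orientation-preserving diffeomorphism $\psi$ of $S^2$ carrying $C$ to $m(C^* )$, let $F'_C=\psi^{-1}\circ F_{m(C^* )}\circ\psi:V_0(C)\to V_1(C)$ (using the identifications induced by $\psi$), and replace $F_C$ by $\tilde F_C$, where $\tilde F_C=F_C+F'_C$ if $F_C\neq F'_C$ and $\tilde F_C=F_C$ otherwise. Then the resulting maps ($F_C$ together with $F_{m(C^* )}$ when $C\neq m(C^* )$, or $\tilde F_C$ when $C=m(C^* )$) satisfy the filtration rule, the duality rule and the naturality rule.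
   Context: A $k$-dimensional resolution configuration $C$ is a finite set of pairwise disjoint embedded circles $x_1,\dots,x_t$ in $S^2$ together with $k$ embedded arcs which are pairwise disjoint, whose endpoints lie on the circles and whose interiors are disjoint from the circles; unoriented means the arcs carry no orientation. The $x_i$ are the starting circles; the ending circles $y_1,\dots,y_s$ are obtained by surgery along all arcs. The dual configuration $C^*$ consists of the ending circles with the dual arcs obtained by rotating each arc $90$ degrees counterclockwise. Writing $S^2=\mathbb{R}^2\cup\{\infty\}$, the mirror $m(C)$ is the reflection of $C$ in $\mathbb{R}\times\{0\}$. There are canonical identifications $V_0(m(C^* ))=V_1(C)$ and $V_1(m(C^* ))=V_0(C)$, where $V_0(C)=\bigotimes_i\mathbb{F}_2[x_i]/(x_i^2)$ and $V_1(C)=\bigotimes_j\mathbb{F}_2[y_j]/(y_j^2)$, with bases of monomials. For a monomial $a$, $a^*$ is obtained by applying $1\mapsto z$, $z\mapsto 1$ in each tensor factor $\mathbb{F}_2[z]/(z^2)$. Rules: (Naturality) if an orientation-preserving diffeomorphism of $S^2$ sends $C$ to $C'$, then $F_C=F_{C'}$ under the induced identifications of $V_0$ and $V_1$. (Duality) for all monomials $a\in V_0(C)$, $b\in V_1(C)$ the coefficient of $b$ in $F_C(a)$ equals the coefficient of $a^*$ in $F_{m(C^* )}(b^* )$. (Filtration) for a point $P$ on the starting circles, let $x(P)$, $y(P)$ be the starting and ending circles containing $P$; if a monomial $a$ is divisible by $x(P)$ and the coefficient of a monomial $b$ in $F_C(a)$ is non-zero, then $b$ is divisible by $y(P)$.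 *)

theory Defs
  imports "HOL-Homology.Homology"
begin

type_synonym pt = "nat \<Rightarrow> real"

definition S2 :: "pt set" where
  "S2 = topspace (nsphere 2)"

text \<open>The model square for a thickened arc (band). For a band b, the arc is
  t |-> b(t,0) with endpoints b(-1,0), b(1,0); the band meets the circles exactly in
  b({-1,1} x [-1,1]).\<close>
definition sq :: "(real \<times> real) set" where
  "sq = {-1..1} \<times> {-1..1}"

record rconf =
  circles :: "pt set set"
  bands   :: "(real \<times> real \<Rightarrow> pt) set"

definition is_circle :: "pt set \<Rightarrow> bool" where
  "is_circle c \<longleftrightarrow> c \<subseteq> S2 \<and> subtopology (nsphere 2) c homeomorphic_space nsphere 1"

definition is_band :: "(real \<times> real \<Rightarrow> pt) \<Rightarrow> bool" where
  "is_band b \<longleftrightarrow> continuous_map (top_of_set sq) (nsphere 2) b \<and> inj_on b sq"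

text \<open>An (unoriented) resolution configuration, each arc given together with a thickening.\<close>
definition valid_conf :: "rconf \<Rightarrow> bool" where
  "valid_conf C \<longleftrightarrow>
     finite (circles C) \<and> (\<forall>c\<in>circles C. is_circle c) \<and> pairwise disjnt (circles C) \<and>
     finite (bands C) \<and>
     (\<forall>b\<in>bands C. is_band b \<and> {z \<in> sq. b z \<in> \<Union>(circles C)} = {-1,1} \<times> {-1..1}) \<and>
     (\<forall>b\<in>bands C. \<forall>b'\<in>bands C. b \<noteq> b' \<longrightarrow> disjnt (b ` sq) (b' ` sq))"

definition surg :: "rconf \<Rightarrow> pt set" where
  "surg C = (\<Union>(circles C) - (\<Union>b\<in>bands C. b ` ({-1,1} \<times> {-1<..<1})))
            \<union> (\<Union>b\<in>bands C. b ` ({-1..1} \<times> {-1,1}))"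

definition ending :: "rconf \<Rightarrow> pt set set" where
  "ending C = connected_components_of (subtopology (nsphere 2) (surg C))"

text \<open>Dual configuration: ending circles with the dual arcs (cocores of the bands).\<close>
definition dual :: "rconf \<Rightarrow> rconf" where
  "dual C = \<lparr> circles = ending C, bands = (\<lambda>b. b \<circ> prod.swap) ` bands C \<rparr>"

text \<open>Reflection; corresponds to reflection of R^2 in R x {0} under stereographic projection.\<close>
definition mir :: "pt \<Rightarrow> pt" where
  "mir p = (\<lambda>i. if i = 1 then - p i else p i)"

definition mirror :: "rconf \<Rightarrow> rconf" where
  "mirror C = \<lparr> circles = (\<lambda>c. mir ` c) ` circles C, bands = (\<lambda>b. mir \<circ> b) ` bands C \<rparr>"

definition md :: "rconf \<Rightarrow> rconf" where
  "md C = mirror (dual C)"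

definition oph :: "(pt \<Rightarrow> pt) \<Rightarrow> bool" where
  "oph f \<longleftrightarrow> homeomorphic_map (nsphere 2) (nsphere 2) f \<and> Brouwer_degree2 2 f = 1"

definition img :: "(pt \<Rightarrow> pt) \<Rightarrow> pt set set \<Rightarrow> pt set set" where
  "img f S = (\<lambda>c. f ` c) ` S"

definition sends :: "(pt \<Rightarrow> pt) \<Rightarrow> rconf \<Rightarrow> rconf \<Rightarrow> bool" where
  "sends f C C' \<longleftrightarrow> img f (circles C) = circles C' \<and>
     (\<lambda>b. f ` (b ` sq)) ` bands C = (\<lambda>b. b ` sq) ` bands C'"

text \<open>A map V_0(C) -> V_1(C) over F_2 is given by its matrix of coefficients on monomials:
  F A B = coefficient of the monomial prod B (B a set of ending circles) in F(prod A)
  (A a set of starting circles); F_2 is represented by bool (addition = xor).\<close>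
type_synonym coef = "pt set set \<Rightarrow> pt set set \<Rightarrow> bool"

definition filtration :: "rconf \<Rightarrow> coef \<Rightarrow> bool" where
  "filtration C F \<longleftrightarrow>
     (\<forall>P A B. P \<in> \<Union>(circles C) \<longrightarrow> P \<in> \<Union>(ending C) \<longrightarrow> A \<subseteq> circles C \<longrightarrow> B \<subseteq> ending C \<longrightarrow>
        F A B \<longrightarrow> (\<forall>x\<in>A. P \<in> x \<longrightarrow> (\<forall>y\<in>ending C. P \<in> y \<longrightarrow> y \<in> B)))"

text \<open>Duality between F = F_C and G = F_{m(C*)}; identifications V_0(m(C*)) = V_1(C),
  V_1(m(C*)) = V_0(C) via the reflection; a* = complementary monomial.\<close>
definition duality :: "rconf \<Rightarrow> coef \<Rightarrow> coef \<Rightarrow> bool" where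
  "duality C F G \<longleftrightarrow>
     (\<forall>A B. A \<subseteq> circles C \<longrightarrow> B \<subseteq> ending C \<longrightarrow>
        F A B = G (img mir (ending C - B)) (img mir (circles C - A)))"

definition natural :: "(pt \<Rightarrow> pt) \<Rightarrow> rconf \<Rightarrow> coef \<Rightarrow> coef \<Rightarrow> bool" where
  "natural f C F F' \<longleftrightarrow>
     (\<forall>A B. A \<subseteq> circles C \<longrightarrow> B \<subseteq> ending C \<longrightarrow> F' (img f A) (img f B) = F A B)"

definition rules :: "rconf set \<Rightarrow> (rconf \<Rightarrow> coef) \<Rightarrow> bool" where
  "rules K Fam \<longleftrightarrow>
     (\<forall>D\<in>K. filtration D (Fam D)) \<and>
     (\<forall>D\<in>K. md D \<in> K \<longrightarrow> duality D (Fam D) (Fam (md D))) \<and>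
     (\<forall>D\<in>K. \<forall>D'\<in>K. \<forall>f. oph f \<longrightarrow> sends f D D' \<longrightarrow> natural f D (Fam D) (Fam D'))"

text \<open>F_{m(C*)} defined from F_C by the duality rule.\<close>
definition dualmap :: "rconf \<Rightarrow> coef \<Rightarrow> coef" where
  "dualmap C F = (\<lambda>A' B'. F (circles C - img mir B') (ending C - img mir A'))"

definition transport :: "(pt \<Rightarrow> pt) \<Rightarrow> coef \<Rightarrow> coef" where
  "transport f G = (\<lambda>A B. G (img f A) (img f B))"

definition Fprime :: "rconf \<Rightarrow> coef \<Rightarrow> (pt \<Rightarrow> pt) \<Rightarrow> coef" where
  "Fprime C F psi = transport psi (dualmap C F)"

definition Ftilde :: "rconf \<Rightarrow> coef \<Rightarrow> (pt \<Rightarrow> pt) \<Rightarrow> coef" where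
  "Ftilde C F psi =
     (if \<exists>A B. A \<subseteq> circles C \<and> B \<subseteq> ending C \<and> F A B \<noteq> Fprime C F psi A B
      then (\<lambda>A B. F A B \<noteq> Fprime C F psi A B) else F)"

end

theory Submission
  imports Defs "HOL-Analysis.Abstract_Topological_Spaces"
begin

text \<open>
  The geometric input is that an orientation-preserving homeomorphism \<open>f\<close> carrying \<open>D\<close> to \<open>D'\<close>
  carries the ending circles of \<open>D\<close> to those of \<open>D'\<close>. Read in the charts of corresponding bands,
  \<open>f\<close> is a self-homeomorphism of the square fixing the two ends; by invariance of domain it
  preserves the boundary, hence the two sides, so it commutes with surgery. Since surgery along the
  dual arcs undoes the surgery, \<open>m(C\<^sup>*)\<close> has as starting and ending circles the mirrored ending and
  starting circles of \<open>C\<close>, and \<open>m(m(C\<^sup>*)\<^sup>*) = C\<close>.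

  \<open>F'\<^sub>C\<close> evaluates \<open>F\<^sub>C\<close> at \<open>(X - m\<psi>(B), Y - m\<psi>(A))\<close>, where \<open>X, Y\<close> are the starting and ending
  circles and \<open>m\<psi>\<close> is the reflection composed with \<open>\<psi>\<close>. Doing this twice is the action of the
  self-map \<open>(m\<psi>)\<^sup>2\<close> of \<open>C\<close>, so by naturality \<open>F \<mapsto> F'\<close> is an involution and \<open>F\<^sub>C + F'\<^sub>C\<close> (or
  \<open>F\<^sub>C\<close> when \<open>F\<^sub>C = F'\<^sub>C\<close>) is a fixed point. A fixed point is in duality with its transport
  to \<open>m(C\<^sup>*)\<close>. Filtration survives dualising, transporting and adding, and naturality of the
  whole family reduces to naturality under self-maps of \<open>C\<close>.
\<close>

section \<open>Orientation-preserving homeomorphisms of the sphere\<close>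

lemma nsphere2_eq_top_of_set_S2: "nsphere 2 = top_of_set S2"
  by (simp add: S2_def nsphere euclidean_product_topology)

lemma topspace_nsphere2: "topspace (nsphere 2) = S2"
  by (simp only: S2_def)

lemma homeomorphic_map_nsphere2_iff:
  "homeomorphic_map (nsphere 2) (nsphere 2) f \<longleftrightarrow> homeomorphism S2 S2 f (inv_into S2 f)"
proof
  assume "homeomorphic_map (nsphere 2) (nsphere 2) f"
  then obtain g where g: "homeomorphism S2 S2 f g"
    by (auto simp: nsphere2_eq_top_of_set_S2 homeomorphic_map_maps homeomorphic_maps_iff_homeomorphism)
  have "inj_on f S2"
    using g by (metis homeomorphism_apply1 inj_on_inverseI)
  then have "inv_into S2 f y = g y" if "y \<in> S2" for y
    using g that by (metis homeomorphism_apply2 homeomorphism_image2 imageI inv_into_f_eq)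
  then show "homeomorphism S2 S2 f (inv_into S2 f)"
    by (intro homeomorphism_cong[OF g refl refl]) auto
next
  assume "homeomorphism S2 S2 f (inv_into S2 f)"
  then show "homeomorphic_map (nsphere 2) (nsphere 2) f"
    by (auto simp: nsphere2_eq_top_of_set_S2 homeomorphic_map_maps homeomorphic_maps_iff_homeomorphism)
qed

lemma oph_homeomorphism: "oph f \<Longrightarrow> homeomorphism S2 S2 f (inv_into S2 f)"
  by (simp add: oph_def homeomorphic_map_nsphere2_iff)

lemma oph_inj_on: "oph f \<Longrightarrow> inj_on f S2"
  by (rule inj_on_inverseI[where g = "inv_into S2 f"]) (simp add: homeomorphism_apply1[OF oph_homeomorphism])

lemma oph_image: "oph f \<Longrightarrow> f ` S2 = S2"
  using oph_homeomorphism homeomorphism_image1 by blast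

lemma oph_id: "oph id"
  by (simp add: oph_def homeomorphic_map_id)

lemma oph_comp:
  assumes "oph f" "oph g"
  shows "oph (g \<circ> f)"
proof -
  have "continuous_map (nsphere 2) (nsphere 2) f" "continuous_map (nsphere 2) (nsphere 2) g"
    using assms by (auto simp: oph_def homeomorphic_imp_continuous_map)
  then show ?thesis
    using assms Brouwer_degree2_compose homeomorphic_map_compose by (fastforce simp: oph_def)
qed

lemma oph_inv:
  assumes f: "oph f"
  shows "oph (inv_into S2 f)"
proof -
  have hinv: "homeomorphic_map (nsphere 2) (nsphere 2) (inv_into S2 f)"
    using oph_homeomorphism[OF f] homeomorphic_map_nsphere2_iff
    by (metis homeomorphic_map_maps homeomorphic_maps_iff_homeomorphism homeomorphism_symD
        nsphere2_eq_top_of_set_S2)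
  have "Brouwer_degree2 2 (inv_into S2 f \<circ> f) = Brouwer_degree2 2 id"
    using oph_inj_on[OF f] by (intro Brouwer_degree2_eq) (simp add: S2_def[symmetric])
  then have "Brouwer_degree2 2 (inv_into S2 f) * Brouwer_degree2 2 f = 1"
    using f hinv by (simp add: Brouwer_degree2_compose oph_def homeomorphic_imp_continuous_map)
  then show ?thesis
    using f hinv by (simp add: oph_def)
qed

lemma mir_mir [simp]: "mir (mir p) = p"
  by (simp add: mir_def fun_eq_iff)

lemma mir_comp_mir [simp]: "mir \<circ> mir = id"
  by (simp add: fun_eq_iff)

lemma mir_eq_iff [simp]: "mir p = mir q \<longleftrightarrow> p = q"
  by (metis mir_mir)

lemma inj_mir: "inj mir"
  by (metis injI mir_mir)

lemma homeomorphic_map_mir: "homeomorphic_map (nsphere 2) (nsphere 2) mir"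
proof -
  have "continuous_map (nsphere 2) (nsphere 2) mir"
    using continuous_map_nsphere_reflection[of 2 1] by (simp add: mir_def[abs_def])
  then show ?thesis
    unfolding homeomorphic_map_maps homeomorphic_maps_def by auto
qed

lemma mir_image_S2 [simp]: "mir ` S2 = S2"
  using homeomorphic_map_mir by (simp add: homeomorphic_map_nsphere2_iff homeomorphism_image1)

lemma mir_in_S2_iff [simp]: "mir p \<in> S2 \<longleftrightarrow> p \<in> S2"
  by (metis mir_image_S2 imageI mir_mir)

lemma oph_mir_conj:
  assumes f: "oph f"
  shows "oph (mir \<circ> f \<circ> mir)"
proof -
  have cf: "continuous_map (nsphere 2) (nsphere 2) f" and cm: "continuous_map (nsphere 2) (nsphere 2) mir"
    using f homeomorphic_map_mir by (auto simp: oph_def homeomorphic_imp_continuous_map)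
  have "\<bar>Brouwer_degree2 2 mir\<bar> = 1"
    by (rule Brouwer_degree2_homeomorphic_map[OF homeomorphic_map_mir])
  then have "Brouwer_degree2 2 (mir \<circ> f \<circ> mir) = 1"
    using f Brouwer_degree2_compose[OF cm continuous_map_compose[OF cf cm]]
      Brouwer_degree2_compose[OF cf cm]
    by (simp add: oph_def) (metis abs_mult_self_eq mult_1)
  then show ?thesis
    using f homeomorphic_map_mir by (auto simp: oph_def intro: homeomorphic_map_compose)
qed

lemma img_img: "img f (img g A) = img (f \<circ> g) A"
  by (simp add: img_def image_comp)

lemma img_id [simp]: "img id A = A"
  by (simp add: img_def)

lemma img_mono: "A \<subseteq> B \<Longrightarrow> img f A \<subseteq> img f B"
  unfolding img_def by (rule image_mono)

lemma img_subset_Pow_S2: "f ` S2 \<subseteq> S2 \<Longrightarrow> A \<subseteq> Pow S2 \<Longrightarrow> img f A \<subseteq> Pow S2"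
  unfolding img_def by blast

lemma img_diff:
  assumes "inj_on f S2" "A \<subseteq> Pow S2" "B \<subseteq> Pow S2"
  shows "img f (A - B) = img f A - img f B"
  unfolding img_def using assms by (intro inj_on_image_set_diff[OF inj_on_image_Pow]) auto

lemma img_mem_iff:
  assumes "inj_on f S2" "x \<subseteq> S2" "A \<subseteq> Pow S2"
  shows "f ` x \<in> img f A \<longleftrightarrow> x \<in> A"
  using inj_on_image_Pow[OF assms(1)] assms(2,3) unfolding img_def by (auto simp: inj_on_eq_iff)

lemma img_inv_into_img:
  assumes "oph f" "A \<subseteq> Pow S2"
  shows "img (inv_into S2 f) (img f A) = A"
proof -
  have "inv_into S2 f ` f ` c = c" if "c \<in> A" for c
    using that assms(2) by (intro inv_into_image_cancel[OF oph_inj_on[OF assms(1)]]) blast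
  then show ?thesis
    by (simp add: img_def image_image)
qed

lemma img_img_inv_into:
  assumes "oph f" "A \<subseteq> Pow S2"
  shows "img f (img (inv_into S2 f) A) = A"
proof -
  have "f ` inv_into S2 f ` c = c" if "c \<in> A" for c
    using that assms(2) by (intro image_inv_into_cancel[OF oph_image[OF assms(1)]]) blast
  then show ?thesis
    by (simp add: img_def image_image)
qed

lemma img_mir_mir [simp]: "img mir (img mir A) = A"
  by (simp add: img_def image_image)

lemma inj_image_mir: "inj (image mir)"
  using inj_on_image_Pow[OF inj_mir] by simp

lemma img_mir_diff: "img mir (A - B) = img mir A - img mir B"
  unfolding img_def by (rule image_set_diff[OF inj_image_mir])

lemma img_mir_mem_iff [simp]: "mir ` x \<in> img mir A \<longleftrightarrow> x \<in> A"
  unfolding img_def by (rule inj_image_mem_iff[OF inj_image_mir])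

lemma image_mir_mem_iff: "mir ` x \<in> A \<longleftrightarrow> x \<in> img mir A"
  using img_mir_mem_iff[of x "img mir A"] by simp

lemma Union_img: "\<Union>(img f A) = f ` \<Union>A"
  by (simp add: img_def image_Union)

section \<open>Bands and surgery\<close>

abbreviation band_ends :: "(real \<times> real) set" where
  "band_ends \<equiv> {-1,1} \<times> {-1..1}"

abbreviation band_sides :: "(real \<times> real) set" where
  "band_sides \<equiv> {-1..1} \<times> {-1,1}"

lemma band_ends_subset_sq: "band_ends \<subseteq> sq"
  and band_sides_subset_sq: "band_sides \<subseteq> sq"
  and open_band_ends_subset_sq: "{-1,1} \<times> {-1<..<1} \<subseteq> sq"
  by (auto simp: sq_def)

lemma compact_sq: "compact sq"
  by (simp add: sq_def compact_Times)

lemma swap_image_sq [simp]: "prod.swap ` sq = sq"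
  by (simp add: sq_def product_swap)

lemma swap_in_sq_iff [simp]: "prod.swap z \<in> sq \<longleftrightarrow> z \<in> sq"
  by (cases z) (auto simp: sq_def)

lemma is_band_continuous_on: "is_band b \<Longrightarrow> continuous_on sq b"
  and is_band_inj_on: "is_band b \<Longrightarrow> inj_on b sq"
  and is_band_image_subset: "is_band b \<Longrightarrow> b ` sq \<subseteq> S2"
  by (auto simp: is_band_def nsphere2_eq_top_of_set_S2 image_subset_iff_funcset)

lemma is_band_comp_swap:
  assumes "is_band b"
  shows "is_band (b \<circ> prod.swap)"
proof -
  have "continuous_map (top_of_set sq) (top_of_set sq) prod.swap"
    by (simp add: continuous_on_swap)
  then have "continuous_map (top_of_set sq) (nsphere 2) (b \<circ> prod.swap)"
    using assms unfolding is_band_def by (blast intro: continuous_map_compose)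
  moreover have "inj_on (b \<circ> prod.swap) sq"
    using is_band_inj_on[OF assms] by (intro comp_inj_on) (auto simp: inj_on_def)
  ultimately show ?thesis
    by (simp add: is_band_def)
qed

lemma is_band_mir_comp:
  assumes "is_band b"
  shows "is_band (mir \<circ> b)"
proof -
  have "continuous_map (top_of_set sq) (nsphere 2) (mir \<circ> b)"
    using assms homeomorphic_imp_continuous_map[OF homeomorphic_map_mir] unfolding is_band_def
    by (blast intro: continuous_map_compose)
  moreover have "inj_on (mir \<circ> b) sq"
    using is_band_inj_on[OF assms] inj_mir by (simp add: comp_inj_on inj_on_subset)
  ultimately show ?thesis
    by (simp add: is_band_def)
qed

text \<open>The part of \<^const>\<open>valid_conf\<close> that passes to \<^term>\<open>md C\<close>, whose starting circles are
  the ending circles of \<^term>\<open>C\<close>; these are not shown to be embedded circles.\<close>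
definition wf_conf :: "rconf \<Rightarrow> bool" where
  "wf_conf D \<longleftrightarrow> (\<forall>c\<in>circles D. c \<subseteq> S2) \<and>
     (\<forall>b\<in>bands D. is_band b \<and> {z \<in> sq. b z \<in> \<Union>(circles D)} = band_ends) \<and>
     (\<forall>b\<in>bands D. \<forall>b'\<in>bands D. b \<noteq> b' \<longrightarrow> disjnt (b ` sq) (b' ` sq))"

lemma wf_conf_if_valid_conf: "valid_conf D \<Longrightarrow> wf_conf D"
  by (simp add: wf_conf_def valid_conf_def is_circle_def)

lemma wf_confD:
  assumes "wf_conf D"
  shows "c \<in> circles D \<Longrightarrow> c \<subseteq> S2"
    and "b \<in> bands D \<Longrightarrow> is_band b"
    and "b \<in> bands D \<Longrightarrow> z \<in> sq \<Longrightarrow> b z \<in> \<Union>(circles D) \<longleftrightarrow> z \<in> band_ends"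
    and "b \<in> bands D \<Longrightarrow> b' \<in> bands D \<Longrightarrow> b \<noteq> b' \<Longrightarrow> disjnt (b ` sq) (b' ` sq)"
proof -
  show "c \<in> circles D \<Longrightarrow> c \<subseteq> S2" "b \<in> bands D \<Longrightarrow> is_band b"
    "b \<in> bands D \<Longrightarrow> b' \<in> bands D \<Longrightarrow> b \<noteq> b' \<Longrightarrow> disjnt (b ` sq) (b' ` sq)"
    using assms by (simp_all add: wf_conf_def)
  assume "b \<in> bands D" "z \<in> sq"
  then show "b z \<in> \<Union>(circles D) \<longleftrightarrow> z \<in> band_ends"
    using assms unfolding wf_conf_def by (metis (no_types, lifting) mem_Collect_eq)
qed

definition band_images :: "rconf \<Rightarrow> pt set set" where
  "band_images D = (\<lambda>b. b ` sq) ` bands D"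

lemma circles_subset_Pow_S2: "wf_conf D \<Longrightarrow> circles D \<subseteq> Pow S2"
  using wf_confD(1) by blast

lemma band_images_subset_Pow_S2: "wf_conf D \<Longrightarrow> band_images D \<subseteq> Pow S2"
  using is_band_image_subset wf_confD(2) by (fastforce simp: band_images_def)

lemma band_image_UN_mem_iff:
  assumes D: "wf_conf D" and b: "b \<in> bands D" and w: "w \<in> sq" and X: "X \<subseteq> sq"
  shows "b w \<in> (\<Union>b'\<in>bands D. b' ` X) \<longleftrightarrow> w \<in> X"
proof
  assume "b w \<in> (\<Union>b'\<in>bands D. b' ` X)"
  then obtain b' z where b': "b' \<in> bands D" and z: "z \<in> X" and eq: "b w = b' z"
    by blast
  have "b w \<in> b ` sq" "b' z \<in> b' ` sq"
    using w z X by auto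
  then have "b' = b"
    using wf_confD(4)[OF D b b'] eq by (auto simp: disjnt_iff)
  then show "w \<in> X"
    using is_band_inj_on[OF wf_confD(2)[OF D b]] eq w z X by (metis inj_onD subsetD)
qed (use b in blast)

lemma band_ends_image:
  assumes "wf_conf D" "b \<in> bands D"
  shows "b ` band_ends = b ` sq \<inter> \<Union>(circles D)"
proof -
  have "b ` {z \<in> sq. b z \<in> \<Union>(circles D)} = b ` sq \<inter> \<Union>(circles D)"
    by blast
  then show ?thesis
    using assms by (simp add: wf_conf_def)
qed

lemma surg_band_iff:
  assumes D: "wf_conf D" and b: "b \<in> bands D" and w: "w \<in> sq"
  shows "b w \<in> surg D \<longleftrightarrow> w \<in> band_sides"
proof -
  have "b w \<in> surg D \<longleftrightarrow>
      (b w \<in> \<Union>(circles D) \<and> b w \<notin> (\<Union>b'\<in>bands D. b' ` ({-1,1} \<times> {-1<..<1})))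
      \<or> b w \<in> (\<Union>b'\<in>bands D. b' ` band_sides)"
    unfolding surg_def by blast
  also have "\<dots> \<longleftrightarrow> (w \<in> band_ends \<and> w \<notin> {-1,1} \<times> {-1<..<1}) \<or> w \<in> band_sides"
    unfolding band_image_UN_mem_iff[OF D b w open_band_ends_subset_sq]
      band_image_UN_mem_iff[OF D b w band_sides_subset_sq] wf_confD(3)[OF D b w] ..
  also have "\<dots> \<longleftrightarrow> w \<in> band_sides"
    using w by (cases w) (auto simp: sq_def)
  finally show ?thesis .
qed

lemma surg_outside_bands_iff:
  assumes "p \<notin> \<Union>(band_images D)"
  shows "p \<in> surg D \<longleftrightarrow> p \<in> \<Union>(circles D)"
proof -
  have outside: "p \<notin> (\<Union>b\<in>bands D. b ` X)" if "X \<subseteq> sq" for X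
    using assms that by (auto simp: band_images_def)
  show ?thesis
    using outside[OF band_sides_subset_sq] outside[OF open_band_ends_subset_sq]
    unfolding surg_def by blast
qed

lemma surg_subset_S2:
  assumes D: "wf_conf D"
  shows "surg D \<subseteq> S2"
proof -
  have "(\<Union>b\<in>bands D. b ` band_sides) \<subseteq> (\<Union>b\<in>bands D. b ` sq)"
    by (rule UN_mono[OF order_refl image_mono[OF band_sides_subset_sq]])
  then have "surg D \<subseteq> \<Union>(circles D) \<union> (\<Union>b\<in>bands D. b ` sq)"
    unfolding surg_def by (rule Un_mono[OF Diff_subset])
  also have "\<dots> \<subseteq> S2"
  proof (rule Un_least)
    show "\<Union>(circles D) \<subseteq> S2"
      by (rule Union_least) (rule wf_confD(1)[OF D])
    show "(\<Union>b\<in>bands D. b ` sq) \<subseteq> S2"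
      by (rule UN_least) (rule is_band_image_subset[OF wf_confD(2)[OF D]])
  qed
  finally show ?thesis .
qed

lemma ending_subset_Pow_S2: "ending D \<subseteq> Pow S2"
proof
  fix c
  assume "c \<in> ending D"
  then have "c \<subseteq> topspace (subtopology (nsphere 2) (surg D))"
    unfolding ending_def by (rule connected_components_of_subset)
  then show "c \<in> Pow S2"
    unfolding topspace_subtopology topspace_nsphere2 by blast
qed

lemma Union_ending:
  assumes "wf_conf D"
  shows "\<Union>(ending D) = surg D"
proof -
  have "\<Union>(ending D) = S2 \<inter> surg D"
    unfolding ending_def Union_connected_components_of topspace_subtopology topspace_nsphere2 ..
  then show ?thesis
    using surg_subset_S2[OF assms] by blast
qed

section \<open>The dual and the mirror configuration\<close>

lemma comp_swap_image_sq: "(b \<circ> prod.swap) ` sq = b ` sq"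
  by (metis image_comp swap_image_sq)

lemma band_images_dual: "band_images (dual D) = band_images D"
  by (simp add: band_images_def dual_def image_image comp_swap_image_sq[unfolded comp_def])

lemma wf_conf_dual:
  assumes D: "wf_conf D"
  shows "wf_conf (dual D)"
  unfolding wf_conf_def
proof (intro conjI ballI impI)
  show "c \<subseteq> S2" if "c \<in> circles (dual D)" for c
    using that ending_subset_Pow_S2 by (auto simp: dual_def)
  fix b'
  assume "b' \<in> bands (dual D)"
  then obtain b where b: "b \<in> bands D" and b': "b' = b \<circ> prod.swap"
    by (auto simp: dual_def)
  show "is_band b'"
    using is_band_comp_swap[OF wf_confD(2)[OF D b]] b' by simp
  have "{z \<in> sq. b' z \<in> surg D} = band_ends"
    using surg_band_iff[OF D b] unfolding b' by (auto simp: sq_def)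
  then show "{z \<in> sq. b' z \<in> \<Union>(circles (dual D))} = band_ends"
    using Union_ending[OF D] by (simp add: dual_def)
  fix b2'
  assume "b2' \<in> bands (dual D)" "b' \<noteq> b2'"
  then obtain b2 where "b2 \<in> bands D" "b2' = b2 \<circ> prod.swap" "b2 \<noteq> b"
    using b' by (auto simp: dual_def)
  then show "disjnt (b' ` sq) (b2' ` sq)"
    using wf_confD(4)[OF D b] b' comp_swap_image_sq by metis
qed

lemma surg_dual:
  assumes D: "wf_conf D"
  shows "surg (dual D) = \<Union>(circles D)"
proof (rule Set.set_eqI)
  fix p
  have U: "\<Union>(circles (dual D)) = surg D"
    using Union_ending[OF D] by (simp add: dual_def)
  show "p \<in> surg (dual D) \<longleftrightarrow> p \<in> \<Union>(circles D)"
  proof (cases "p \<in> \<Union>(band_images D)")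
    case True
    then obtain b w where b: "b \<in> bands D" and w: "w \<in> sq" and p: "p = b w"
      by (auto simp: band_images_def)
    have "b \<circ> prod.swap \<in> bands (dual D)"
      using b by (simp add: dual_def)
    moreover have "p = (b \<circ> prod.swap) (prod.swap w)"
      using p by (cases w) simp
    ultimately have "p \<in> surg (dual D) \<longleftrightarrow> prod.swap w \<in> band_sides"
      using surg_band_iff[OF wf_conf_dual[OF D], of "b \<circ> prod.swap" "prod.swap w"] w by simp
    also have "\<dots> \<longleftrightarrow> w \<in> band_ends"
      by (cases w) auto
    also have "\<dots> \<longleftrightarrow> p \<in> \<Union>(circles D)"
      unfolding p by (rule wf_confD(3)[OF D b w, symmetric])
    finally show ?thesis .
  next
    case False
    then show ?thesis
      using surg_outside_bands_iff[of p D] surg_outside_bands_iff[of p "dual D"] U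
      by (simp add: band_images_dual)
  qed
qed

lemma compact_connected_nsphere1:
  "compact_space (nsphere 1) \<and> connected_space (nsphere 1)"
proof -
  obtain f :: "pt \<Rightarrow> complex" and g where
    "homeomorphic_maps (nsphere (DIM(complex) - 1)) (top_of_set (sphere 0 1 \<inter> span Basis)) f g"
    using homeomorphic_maps_nsphere_euclidean_sphere[of "Basis::complex set" "DIM(complex)"]
    by (auto simp: independent_Basis orthogonal_Basis)
  then have h: "nsphere 1 homeomorphic_space top_of_set (sphere (0::complex) 1)"
    using homeomorphic_maps_imp_homeomorphic_space by (fastforce simp: span_Basis)
  have "compact_space (top_of_set (sphere (0::complex) 1))"
    by (simp add: compact_space_def compactin_subtopology)
  moreover have "connected_space (top_of_set (sphere (0::complex) 1))"
    using connected_sphere[of "0::complex" 1]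
    by (simp add: connectedin_topspace[symmetric] connectedin_subtopology)
  ultimately show ?thesis
    using homeomorphic_compact_space[OF h] homeomorphic_connected_space[OF h] by simp
qed

lemma is_circle_closedin_connectedin:
  assumes "is_circle c"
  shows "closedin (nsphere 2) c" "connectedin (nsphere 2) c" "c \<noteq> {}"
proof -
  have c: "c \<subseteq> topspace (nsphere 2)" "subtopology (nsphere 2) c homeomorphic_space nsphere 1"
    using assms by (auto simp: is_circle_def S2_def)
  then have "compactin (nsphere 2) c"
    using compact_connected_nsphere1 homeomorphic_compact_space by (auto simp: compactin_subspace)
  moreover have "Hausdorff_space (nsphere 2)"
    unfolding nsphere2_eq_top_of_set_S2 by (rule Hausdorff_space_subtopology) simp
  ultimately show "closedin (nsphere 2) c"
    using compactin_imp_closedin by blast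
  show "connectedin (nsphere 2) c"
    using c compact_connected_nsphere1 homeomorphic_connected_space by (auto simp: connectedin_def)
  show "c \<noteq> {}"
    using c(2) homeomorphic_empty_space nonempty_nsphere by fastforce
qed

lemma connected_component_of_Union_closedin:
  assumes fin: "finite \<C>" and disj: "pairwise disjnt \<C>"
    and closed: "\<And>c. c \<in> \<C> \<Longrightarrow> closedin X c" and connected: "\<And>c. c \<in> \<C> \<Longrightarrow> connectedin X c"
    and c: "c \<in> \<C>" and x: "x \<in> c"
  shows "connected_component_of_set (subtopology X (\<Union>\<C>)) x = c"
proof
  define Y where "Y = subtopology X (\<Union>\<C>)"
  have topY: "topspace Y = \<Union>\<C>"
    using closed closedin_subset by (auto simp: Y_def)
  show "c \<subseteq> connected_component_of_set Y x"
    using connected[OF c] c x by (intro connected_component_of_maximal) (auto simp: Y_def connectedin_subtopology)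
  have clo: "closedin Y c"
    using closed[OF c] c by (auto simp: Y_def closedin_subtopology)
  have "closedin X (\<Union>(\<C> - {c}))"
    using fin closed by (intro closedin_Union) auto
  then have "closedin Y (\<Union>(\<C> - {c}))"
    unfolding Y_def closedin_subtopology by blast
  moreover have "\<Union>(\<C> - {c}) = topspace Y - c"
    using c disj topY by (auto simp: pairwise_def disjnt_def)
  ultimately have ope: "openin Y c"
    using c topY by (simp add: openin_closedin_eq Sup_upper)
  have "x \<in> connected_component_of_set Y x"
    using x c topY by (auto simp: connected_component_of_refl)
  then show "connected_component_of_set Y x \<subseteq> c"
    using connectedin_clopen_cases[OF connectedin_connected_component_of clo ope] x
    by (auto simp: disjnt_def)
qed

lemma connected_components_of_Union_closedin:
  assumes fin: "finite \<C>" and disj: "pairwise disjnt \<C>"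
    and closed: "\<And>c. c \<in> \<C> \<Longrightarrow> closedin X c"
    and connected: "\<And>c. c \<in> \<C> \<Longrightarrow> connectedin X c \<and> c \<noteq> {}"
  shows "connected_components_of (subtopology X (\<Union>\<C>)) = \<C>"
proof -
  have component: "connected_component_of_set (subtopology X (\<Union>\<C>)) x = c"
    if "c \<in> \<C>" "x \<in> c" for c x
    using connected_component_of_Union_closedin[of \<C> X c x] assms that by blast
  have "topspace (subtopology X (\<Union>\<C>)) = \<Union>\<C>"
    using closed closedin_subset by auto
  moreover have "connected_component_of_set (subtopology X (\<Union>\<C>)) ` (\<Union>\<C>) = \<C>"
  proof (intro equalityI subsetI)
    show "c \<in> \<C>" if "c \<in> connected_component_of_set (subtopology X (\<Union>\<C>)) ` (\<Union>\<C>)" for c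
      using that component by auto
    fix c
    assume c: "c \<in> \<C>"
    then obtain x where "x \<in> c"
      using connected by blast
    then show "c \<in> connected_component_of_set (subtopology X (\<Union>\<C>)) ` (\<Union>\<C>)"
      using component[OF c] c by (metis UnionI imageI)
  qed
  ultimately show ?thesis
    by (simp add: connected_components_of_def)
qed

lemma ending_dual: "valid_conf C \<Longrightarrow> ending (dual C) = circles C"
  unfolding ending_def surg_dual[OF wf_conf_if_valid_conf]
  by (rule connected_components_of_Union_closedin) (auto simp: valid_conf_def is_circle_closedin_connectedin)

lemma connected_components_of_nsphere2_image:
  assumes f: "homeomorphic_map (nsphere 2) (nsphere 2) f" and S: "S \<subseteq> S2"
  shows "connected_components_of (subtopology (nsphere 2) (f ` S))
       = img f (connected_components_of (subtopology (nsphere 2) S))"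
proof -
  have "f ` S \<subseteq> S2"
    using f S by (auto simp: homeomorphic_map_nsphere2_iff dest: homeomorphism_image1)
  then have "homeomorphic_map (subtopology (nsphere 2) S) (subtopology (nsphere 2) (f ` S)) f"
    using S by (intro homeomorphic_map_subtopologies[OF f]) (auto simp: topspace_nsphere2)
  then show ?thesis
    unfolding img_def by (rule homeomorphic_map_connected_components_of)
qed

lemma surg_mirror: "surg (mirror D) = mir ` surg D"
  by (simp add: surg_def mirror_def image_Union image_UN image_comp image_set_diff[OF inj_mir] image_Un)

lemma ending_mirror: "wf_conf D \<Longrightarrow> ending (mirror D) = img mir (ending D)"
  unfolding ending_def surg_mirror
  by (rule connected_components_of_nsphere2_image[OF homeomorphic_map_mir surg_subset_S2])

lemma wf_conf_mirror:
  assumes D: "wf_conf D"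
  shows "wf_conf (mirror D)"
  unfolding wf_conf_def
proof (intro conjI ballI impI)
  show "c \<subseteq> S2" if c: "c \<in> circles (mirror D)" for c
  proof -
    obtain c0 where c0: "c0 \<in> circles D" and "c = mir ` c0"
      using c by (auto simp: mirror_def)
    then show ?thesis
      using wf_confD(1)[OF D c0] by auto
  qed
  fix b'
  assume "b' \<in> bands (mirror D)"
  then obtain b where b: "b \<in> bands D" and b': "b' = mir \<circ> b"
    by (auto simp: mirror_def)
  show "is_band b'"
    unfolding b' by (rule is_band_mir_comp[OF wf_confD(2)[OF D b]])
  have "\<Union>(circles (mirror D)) = mir ` \<Union>(circles D)"
    by (simp add: mirror_def image_Union)
  then show "{z \<in> sq. b' z \<in> \<Union>(circles (mirror D))} = band_ends"
    using wf_conf_def D b b' inj_image_mem_iff[OF inj_mir] by simp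
  fix b2'
  assume "b2' \<in> bands (mirror D)" "b' \<noteq> b2'"
  then obtain b2 where "b2 \<in> bands D" "b2' = mir \<circ> b2" "b2 \<noteq> b"
    using b' by (auto simp: mirror_def)
  then have "disjnt (b ` sq) (b2 ` sq)"
    using wf_confD(4)[OF D b] by blast
  then show "disjnt (b' ` sq) (b2' ` sq)"
    using b' \<open>b2' = mir \<circ> b2\<close> by (auto simp: disjnt_def)
qed

lemma circles_md: "circles (md C) = img mir (ending C)"
  by (simp add: md_def mirror_def dual_def img_def)

lemma wf_conf_md: "wf_conf D \<Longrightarrow> wf_conf (md D)"
  unfolding md_def by (intro wf_conf_mirror wf_conf_dual)

lemma ending_md: "valid_conf C \<Longrightarrow> ending (md C) = img mir (circles C)"
  unfolding md_def
  by (simp add: ending_mirror wf_conf_dual wf_conf_if_valid_conf ending_dual)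

lemma md_md:
  assumes "valid_conf C"
  shows "md (md C) = C"
proof -
  have "circles (md (md C)) = circles C"
    using circles_md[of "md C"] ending_md[OF assms] by simp
  moreover have "bands (md (md C)) = bands C"
    by (simp add: md_def mirror_def dual_def image_image comp_def)
  ultimately show ?thesis
    by simp
qed

lemma band_images_md: "band_images (md C) = img mir (band_images C)"
proof -
  have "(mir \<circ> b \<circ> prod.swap) ` sq = mir ` b ` sq" for b :: "real \<times> real \<Rightarrow> pt"
    by (metis comp_swap_image_sq image_comp)
  then show ?thesis
    by (simp add: band_images_def md_def mirror_def dual_def img_def image_image comp_assoc)
qed

section \<open>Homeomorphisms commute with surgery\<close>

lemma sends_iff:
  "sends f D D' \<longleftrightarrow> img f (circles D) = circles D' \<and> img f (band_images D) = band_images D'"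
  by (simp add: sends_def img_def band_images_def image_image)

lemma sends_id: "sends id D D"
  by (simp add: sends_iff)

lemma sends_comp: "sends f D1 D2 \<Longrightarrow> sends g D2 D3 \<Longrightarrow> sends (g \<circ> f) D1 D3"
  by (simp add: sends_iff flip: img_img)

lemma sends_inv_into:
  assumes f: "oph f" and D: "wf_conf D" and s: "sends f D D'"
  shows "sends (inv_into S2 f) D' D"
proof -
  have "img f (circles D) = circles D'" "img f (band_images D) = band_images D'"
    using s by (simp_all add: sends_iff)
  then show ?thesis
    unfolding sends_iff
    using img_inv_into_img[OF f] circles_subset_Pow_S2[OF D] band_images_subset_Pow_S2[OF D]
    by metis
qed

lemma homeomorphism_inj_on: "homeomorphism S T h k \<Longrightarrow> inj_on h S"
  by (metis homeomorphism_apply1 inj_on_inverseI)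

lemma homeomorphism_image_cancel:
  assumes "homeomorphism S T h k" "X \<subseteq> S"
  shows "k ` h ` X = X"
proof -
  have "(\<lambda>x. k (h x)) ` X = id ` X"
    using homeomorphism_apply1[OF assms(1)] assms(2) by (intro image_cong) auto
  then show ?thesis
    by (simp add: image_image)
qed

lemma homeomorphism_sq_interior_subset:
  assumes h: "homeomorphism sq sq h k"
  shows "h ` interior sq \<subseteq> interior sq"
proof (rule interior_maximal)
  show "h ` interior sq \<subseteq> sq"
    using homeomorphism_image1[OF h] interior_subset by blast
  have "continuous_on (interior sq) h"
    by (rule continuous_on_subset[OF homeomorphism_cont1[OF h] interior_subset])
  moreover have "inj_on h (interior sq)"
    by (rule inj_on_subset[OF homeomorphism_inj_on[OF h] interior_subset])
  ultimately show "open (h ` interior sq)"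
    by (intro invariance_of_domain) auto
qed

lemma homeomorphism_sq_frontier:
  assumes h: "homeomorphism sq sq h k"
  shows "h ` (sq - interior sq) = sq - interior sq"
proof -
  have "h ` interior sq = interior sq"
  proof
    show "h ` interior sq \<subseteq> interior sq"
      by (rule homeomorphism_sq_interior_subset[OF h])
    have "h ` k ` interior sq \<subseteq> h ` interior sq"
      by (intro image_mono homeomorphism_sq_interior_subset[OF homeomorphism_symD[OF h]])
    then show "interior sq \<subseteq> h ` interior sq"
      using homeomorphism_image_cancel[OF homeomorphism_symD[OF h] interior_subset] by simp
  qed
  moreover have "h ` (sq - interior sq) = h ` sq - h ` interior sq"
    by (rule inj_on_image_set_diff[OF homeomorphism_inj_on[OF h]]) (auto intro: interior_subset[THEN subsetD])
  ultimately show ?thesis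
    using homeomorphism_image1[OF h] by simp
qed

lemma homeomorphism_sq_sides_subset:
  assumes h: "homeomorphism sq sq h k" and ends: "h ` band_ends = band_ends"
  shows "h ` band_sides \<subseteq> band_sides"
proof -
  define V :: "(real \<times> real) set" where "V = {-1<..<1} \<times> {-1,1}"
  have "V = (sq - interior sq) - band_ends"
    unfolding V_def interior_Times sq_def by auto
  moreover have "h ` ((sq - interior sq) - band_ends) = h ` (sq - interior sq) - h ` band_ends"
    by (rule inj_on_image_set_diff[OF homeomorphism_inj_on[OF h]]) (use band_ends_subset_sq in auto)
  ultimately have "h ` V = V"
    using homeomorphism_sq_frontier[OF h] ends by simp
  moreover have "closure V = band_sides"
    unfolding V_def closure_Times by (simp add: closure_closed finite_imp_closed)
  moreover have "closed band_sides"
    by (intro closed_Times closed_atLeastAtMost finite_imp_closed) auto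
  moreover have "continuous_on band_sides h"
    by (rule continuous_on_subset[OF homeomorphism_cont1[OF h] band_sides_subset_sq])
  ultimately show ?thesis
    using image_closure_subset[of V h band_sides] closure_subset[of V] by auto
qed

lemma homeomorphism_sq_sides:
  assumes h: "homeomorphism sq sq h k" and ends: "h ` band_ends = band_ends"
  shows "h ` band_sides = band_sides"
proof
  show "h ` band_sides \<subseteq> band_sides"
    by (rule homeomorphism_sq_sides_subset[OF h ends])
  have "k ` band_ends = band_ends"
    using homeomorphism_image_cancel[OF h band_ends_subset_sq] ends by simp
  then have "h ` k ` band_sides \<subseteq> h ` band_sides"
    by (intro image_mono homeomorphism_sq_sides_subset[OF homeomorphism_symD[OF h]])
  then show "band_sides \<subseteq> h ` band_sides"
    using homeomorphism_image_cancel[OF homeomorphism_symD[OF h] band_sides_subset_sq] by simp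
qed

lemma image_band_ends:
  assumes D: "wf_conf D" and D': "wf_conf D'" and f: "oph f"
    and U: "f ` \<Union>(circles D) = \<Union>(circles D')"
    and b: "b \<in> bands D" and b': "b' \<in> bands D'" and fb: "f ` b ` sq = b' ` sq"
  shows "f ` b ` band_ends = b' ` band_ends"
proof -
  have "f ` (b ` sq \<inter> \<Union>(circles D)) = f ` b ` sq \<inter> f ` \<Union>(circles D)"
    using is_band_image_subset[OF wf_confD(2)[OF D b]] wf_confD(1)[OF D]
    by (intro inj_on_image_Int[OF oph_inj_on[OF f]]) auto
  then show ?thesis
    unfolding band_ends_image[OF D b] band_ends_image[OF D' b'] fb U .
qed

lemma band_homeomorphism:
  assumes D: "wf_conf D" and D': "wf_conf D'" and f: "oph f"
    and U: "f ` \<Union>(circles D) = \<Union>(circles D')"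
    and b: "b \<in> bands D" and b': "b' \<in> bands D'" and fb: "f ` b ` sq = b' ` sq"
  obtains h where "h ` sq = sq" "inj_on h sq" "h ` band_sides = band_sides"
    "\<And>w. w \<in> sq \<Longrightarrow> f (b w) = b' (h w)"
proof -
  note band = wf_confD(2)[OF D b] and band' = wf_confD(2)[OF D' b']
  obtain gb where hb: "homeomorphism sq (b ` sq) b gb"
    using homeomorphism_compact[OF compact_sq is_band_continuous_on[OF band] refl is_band_inj_on[OF band]] by blast
  obtain gb' where hb': "homeomorphism sq (b' ` sq) b' gb'"
    using homeomorphism_compact[OF compact_sq is_band_continuous_on[OF band'] refl is_band_inj_on[OF band']] by blast
  have hf: "homeomorphism (b ` sq) (b' ` sq) f (inv_into S2 f)"
    by (rule homeomorphism_of_subsets[OF oph_homeomorphism[OF f] is_band_image_subset[OF band] order_refl fb])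
  define h where "h = gb' \<circ> (f \<circ> b)"
  have hh: "homeomorphism sq sq h (gb \<circ> inv_into S2 f \<circ> b')"
    unfolding h_def by (rule homeomorphism_compose[OF homeomorphism_compose[OF hb hf] homeomorphism_symD[OF hb']])
  have fbh: "f (b w) = b' (h w)" if "w \<in> sq" for w
  proof -
    have "f (b w) \<in> b' ` sq"
      using fb that by blast
    then show ?thesis
      using homeomorphism_apply2[OF hb'] by (simp add: h_def)
  qed
  have "h ` band_ends = gb' ` f ` b ` band_ends"
    by (simp only: h_def image_comp)
  also have "\<dots> = band_ends"
    unfolding image_band_ends[OF D D' f U b b' fb]
    by (rule homeomorphism_image_cancel[OF hb' band_ends_subset_sq])
  finally have "h ` band_ends = band_ends" .
  then have "h ` band_sides = band_sides"
    by (rule homeomorphism_sq_sides[OF hh])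
  then show ?thesis
    using that homeomorphism_image1[OF hh] homeomorphism_inj_on[OF hh] fbh by blast
qed

lemma surg_image_iff:
  assumes D: "wf_conf D" and D': "wf_conf D'" and f: "oph f" and s: "sends f D D'"
    and p: "p \<in> S2"
  shows "f p \<in> surg D' \<longleftrightarrow> p \<in> surg D"
proof (cases "p \<in> \<Union>(band_images D)")
  case True
  then obtain b w where b: "b \<in> bands D" and w: "w \<in> sq" and pw: "p = b w"
    by (auto simp: band_images_def)
  have "f ` b ` sq \<in> (\<lambda>b. b ` sq) ` bands D'"
    using s b unfolding sends_def by blast
  then obtain b' where b': "b' \<in> bands D'" and fb: "f ` b ` sq = b' ` sq"
    by blast
  have U: "f ` \<Union>(circles D) = \<Union>(circles D')"
    using s by (simp add: sends_iff flip: Union_img)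
  obtain h where h: "h ` sq = sq" "inj_on h sq" "h ` band_sides = band_sides"
    and fbh: "f (b w) = b' (h w)"
    using band_homeomorphism[OF D D' f U b b' fb] w by metis
  have "h w \<in> band_sides \<longleftrightarrow> w \<in> band_sides"
    using inj_on_image_mem_iff[OF h(2) w band_sides_subset_sq] h(3) by simp
  moreover have "h w \<in> sq"
    using h(1) w by blast
  ultimately show ?thesis
    unfolding pw fbh using surg_band_iff[OF D b w] surg_band_iff[OF D' b'] by simp
next
  case False
  have "\<Union>(band_images D) \<subseteq> S2"
    using band_images_subset_Pow_S2[OF D] by blast
  then have "f p \<notin> f ` \<Union>(band_images D)"
    using False p by (simp add: inj_on_image_mem_iff[OF oph_inj_on[OF f]])
  moreover have "f ` \<Union>(band_images D) = \<Union>(band_images D')"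
    "f ` \<Union>(circles D) = \<Union>(circles D')"
    using s by (simp_all add: sends_iff flip: Union_img)
  ultimately have "f p \<in> surg D' \<longleftrightarrow> f p \<in> f ` \<Union>(circles D)"
    using surg_outside_bands_iff by simp
  also have "\<dots> \<longleftrightarrow> p \<in> \<Union>(circles D)"
    using wf_confD(1)[OF D] p by (intro inj_on_image_mem_iff[OF oph_inj_on[OF f]]) auto
  also have "\<dots> \<longleftrightarrow> p \<in> surg D"
    using False by (rule surg_outside_bands_iff[symmetric])
  finally show ?thesis .
qed

lemma surg_image:
  assumes D: "wf_conf D" and D': "wf_conf D'" and f: "oph f" and s: "sends f D D'"
  shows "f ` surg D = surg D'"
proof
  show "f ` surg D \<subseteq> surg D'"
    using surg_image_iff[OF assms] surg_subset_S2[OF D] by blast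
  show "surg D' \<subseteq> f ` surg D"
  proof
    fix q
    assume q: "q \<in> surg D'"
    then obtain p where "p \<in> S2" "q = f p"
      using surg_subset_S2[OF D'] oph_image[OF f] by blast
    then show "q \<in> f ` surg D"
      using surg_image_iff[OF assms] q by blast
  qed
qed

lemma ending_image:
  assumes "wf_conf D" "wf_conf D'" "oph f" "sends f D D'"
  shows "img f (ending D) = ending D'"
  unfolding ending_def surg_image[OF assms, symmetric]
  using connected_components_of_nsphere2_image[OF _ surg_subset_S2] assms by (simp add: oph_def)

section \<open>The three rules\<close>

lemma filtration_dualmap:
  assumes V: "valid_conf C" and FC: "filtration C F"
  shows "filtration (md C) (dualmap C F)"
  unfolding filtration_def
proof (intro allI impI ballI)
  fix P A' B' x y
  assume A': "A' \<subseteq> circles (md C)" and d: "dualmap C F A' B'"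
    and x: "x \<in> A'" "P \<in> x" and y: "y \<in> ending (md C)" "P \<in> y"
  define A B where "A = circles C - img mir B'" and "B = ending C - img mir A'"
  have FAB: "F A B"
    using d by (simp add: dualmap_def A_def B_def)
  have my: "mir ` y \<in> circles C"
    using y(1) ending_md[OF V] by (simp add: image_mir_mem_iff)
  have mx: "mir ` x \<in> ending C"
    using A' x(1) circles_md[of C] by (auto simp: image_mir_mem_iff)
  show "y \<in> B'"
  proof (rule ccontr)
    assume "y \<notin> B'"
    then have "mir ` y \<in> A"
      using my by (simp add: A_def image_mir_mem_iff)
    moreover have "mir P \<in> mir ` y" "mir P \<in> mir ` x"
      using x(2) y(2) by auto
    moreover have "A \<subseteq> circles C" "B \<subseteq> ending C"
      by (auto simp: A_def B_def)
    ultimately have "mir ` x \<in> B"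
      using FC[unfolded filtration_def, rule_format, of "mir P" A B] FAB my mx by blast
    then show False
      using x(1) by (simp add: B_def)
  qed
qed

lemma filtration_transport:
  assumes D: "wf_conf D" and D': "wf_conf D'" and f: "oph f" and s: "sends f D' D"
    and FD: "filtration D \<Phi>"
  shows "filtration D' (transport f \<Phi>)"
  unfolding filtration_def transport_def
proof (intro allI impI ballI)
  fix P A B x y
  assume A: "A \<subseteq> circles D'" and B: "B \<subseteq> ending D'" and d: "\<Phi> (img f A) (img f B)"
    and x: "x \<in> A" "P \<in> x" and y: "y \<in> ending D'" "P \<in> y"
  have fA: "img f A \<subseteq> circles D"
    using img_mono[OF A, of f] s by (simp add: sends_iff)
  have fB: "img f B \<subseteq> ending D"
    using img_mono[OF B, of f] ending_image[OF D' D f s] by simp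
  have fx: "f ` x \<in> img f A" and fy: "f ` y \<in> ending D"
    using x(1) y(1) ending_image[OF D' D f s] by (auto simp: img_def)
  have "f P \<in> f ` x" "f P \<in> f ` y"
    using x(2) y(2) by auto
  then have "f ` y \<in> img f B"
    using FD[unfolded filtration_def, rule_format, of "f P" "img f A" "img f B"] fA fB d fx fy
    by blast
  moreover have "y \<subseteq> S2" "B \<subseteq> Pow S2"
    using y(1) B ending_subset_Pow_S2 by blast+
  ultimately show "y \<in> B"
    using img_mem_iff[OF oph_inj_on[OF f]] by blast
qed

lemma filtration_xor:
  assumes "filtration C F" "filtration C G"
  shows "filtration C (\<lambda>A B. F A B \<noteq> G A B)"
  using assms unfolding filtration_def by metis

lemma duality_dualmap: "duality C F (dualmap C F)"
  unfolding duality_def dualmap_def by (auto simp: double_diff)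

lemma duality_md_swap:
  assumes V: "valid_conf C" and d: "duality C F G"
  shows "duality (md C) G F"
  unfolding duality_def
proof (intro allI impI)
  fix A' B'
  assume A': "A' \<subseteq> circles (md C)" and B': "B' \<subseteq> ending (md C)"
  have "img mir A' \<subseteq> ending C" "img mir B' \<subseteq> circles C"
    using img_mono[OF A', of mir] img_mono[OF B', of mir] ending_md[OF V] circles_md[of C] by auto
  then have "G A' B' = F (circles C - img mir B') (ending C - img mir A')"
    using d[unfolded duality_def, rule_format, of "circles C - img mir B'" "ending C - img mir A'"]
    by (simp add: double_diff img_mir_diff)
  then show "G A' B' = F (img mir (ending (md C) - B')) (img mir (circles (md C) - A'))"
    by (simp add: ending_md[OF V] circles_md img_mir_diff)
qed

lemma sends_mir_conj:
  assumes V: "valid_conf C" and f: "oph f" and s: "sends f (md C) (md C)"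
  shows "sends (mir \<circ> f \<circ> mir) C C"
proof -
  have W: "wf_conf (md C)"
    by (rule wf_conf_md[OF wf_conf_if_valid_conf[OF V]])
  have "img f (img mir (circles C)) = img mir (circles C)"
    using ending_image[OF W W f s] ending_md[OF V] by simp
  moreover have "img f (img mir (band_images C)) = img mir (band_images C)"
    using s band_images_md[of C] by (simp add: sends_iff)
  ultimately show ?thesis
    by (simp add: sends_iff img_img[symmetric])
qed

lemma natural_dualmap:
  assumes V: "valid_conf C" and N: "\<And>g. oph g \<Longrightarrow> sends g C C \<Longrightarrow> natural g C F F"
    and f: "oph f" and s: "sends f (md C) (md C)"
  shows "natural f (md C) (dualmap C F) (dualmap C F)"
  unfolding natural_def
proof (intro allI impI)
  fix A' B'
  assume A': "A' \<subseteq> circles (md C)" and B': "B' \<subseteq> ending (md C)"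
  define g where "g = mir \<circ> f \<circ> mir"
  have W: "wf_conf C"
    by (rule wf_conf_if_valid_conf[OF V])
  have g: "oph g" "sends g C C"
    unfolding g_def by (intro oph_mir_conj f, rule sends_mir_conj[OF V f s])
  have gC: "img g (circles C) = circles C" and gE: "img g (ending C) = ending C"
    using g(2) ending_image[OF W W g] by (simp_all add: sends_iff)
  have mA': "img mir A' \<subseteq> ending C" and mB': "img mir B' \<subseteq> circles C"
    using img_mono[OF A', of mir] img_mono[OF B', of mir] ending_md[OF V] circles_md[of C] by auto
  have PC: "circles C \<subseteq> Pow S2" and PE: "ending C \<subseteq> Pow S2"
    using circles_subset_Pow_S2[OF W] ending_subset_Pow_S2 .
  have g_mir: "img g (img mir X) = img mir (img f X)" for X
    by (simp add: g_def img_img comp_assoc)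
  have "img g (circles C - img mir B') = circles C - img mir (img f B')"
    using img_diff[OF oph_inj_on[OF g(1)] PC] mB' PC gC g_mir by (metis subset_trans)
  moreover have "img g (ending C - img mir A') = ending C - img mir (img f A')"
    using img_diff[OF oph_inj_on[OF g(1)] PE] mA' PE gE g_mir by (metis subset_trans)
  ultimately show "dualmap C F (img f A') (img f B') = dualmap C F A' B'"
    using N[OF g] unfolding natural_def dualmap_def by (metis Diff_subset)
qed

lemma natural_transport:
  assumes D: "wf_conf D" and X: "wf_conf X"
    and r: "oph r" "sends r X D" and s: "oph s" "sends s Y D"
    and N: "\<And>g. oph g \<Longrightarrow> sends g D D \<Longrightarrow> natural g D \<Phi> \<Phi>"
    and f: "oph f" "sends f X Y"
  shows "natural f X (transport r \<Phi>) (transport s \<Phi>)"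
  unfolding natural_def transport_def
proof (intro allI impI)
  fix A B
  assume A: "A \<subseteq> circles X" and B: "B \<subseteq> ending X"
  define g where "g = s \<circ> (f \<circ> inv_into S2 r)"
  have g: "oph g" "sends g D D"
    unfolding g_def
    by (rule oph_comp[OF oph_comp[OF oph_inv[OF r(1)] f(1)] s(1)],
        rule sends_comp[OF sends_comp[OF sends_inv_into[OF r(1) X r(2)] f(2)] s(2)])
  have rA: "img r A \<subseteq> circles D" and rB: "img r B \<subseteq> ending D"
    using img_mono[OF A, of r] img_mono[OF B, of r] r(2) ending_image[OF X D r]
    by (simp_all add: sends_iff)
  have "img g (img r A) = img s (img f A)" "img g (img r B) = img s (img f B)"
    using A B circles_subset_Pow_S2[OF X] ending_subset_Pow_S2 img_inv_into_img[OF r(1)]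
    by (simp_all add: g_def img_img[symmetric] subset_trans)
  then show "\<Phi> (img s (img f A)) (img s (img f B)) = \<Phi> (img r A) (img r B)"
    using N[OF g] rA rB unfolding natural_def by metis
qed

lemma natural_xor:
  assumes "natural f D F F'" "natural f D G G'"
  shows "natural f D (\<lambda>A B. F A B \<noteq> G A B) (\<lambda>A B. F' A B \<noteq> G' A B)"
  using assms by (simp add: natural_def)

lemma Fprime_apply:
  "Fprime C \<Phi> psi A B = \<Phi> (circles C - img mir (img psi B)) (ending C - img mir (img psi A))"
  by (simp add: Fprime_def transport_def dualmap_def)

lemma Fprime_xor:
  "Fprime C (\<lambda>A B. \<Phi> A B \<noteq> \<Psi> A B) psi = (\<lambda>A B. Fprime C \<Phi> psi A B \<noteq> Fprime C \<Psi> psi A B)"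
  by (simp add: Fprime_def transport_def dualmap_def)

lemma sends_md_img:
  assumes V: "valid_conf C" and psi: "oph psi" "sends psi C (md C)"
  shows "img psi (circles C) = img mir (ending C)"
    and "img psi (ending C) = img mir (circles C)"
    and "img psi (band_images C) = img mir (band_images C)"
proof -
  have W: "wf_conf C" "wf_conf (md C)"
    using wf_conf_if_valid_conf[OF V] wf_conf_md by blast+
  show "img psi (circles C) = img mir (ending C)" "img psi (band_images C) = img mir (band_images C)"
    using psi(2) by (simp_all add: sends_iff circles_md band_images_md)
  show "img psi (ending C) = img mir (circles C)"
    using ending_image[OF W psi] ending_md[OF V] by simp
qed

lemma mir_psi_complement:
  assumes V: "valid_conf C" and psi: "oph psi" "sends psi C (md C)"
  shows "X \<subseteq> ending C \<Longrightarrow> img mir (img psi (ending C - X)) = circles C - img mir (img psi X)"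
    and "X \<subseteq> circles C \<Longrightarrow> img mir (img psi (circles C - X)) = ending C - img mir (img psi X)"
proof -
  note W = wf_conf_if_valid_conf[OF V]
  show "img mir (img psi (ending C - X)) = circles C - img mir (img psi X)" if "X \<subseteq> ending C"
    using img_diff[OF oph_inj_on[OF psi(1)] ending_subset_Pow_S2] that ending_subset_Pow_S2
      sends_md_img[OF V psi] by (simp add: img_mir_diff subset_trans)
  show "img mir (img psi (circles C - X)) = ending C - img mir (img psi X)" if "X \<subseteq> circles C"
    using img_diff[OF oph_inj_on[OF psi(1)] circles_subset_Pow_S2[OF W]] that
      circles_subset_Pow_S2[OF W] sends_md_img[OF V psi] by (simp add: img_mir_diff subset_trans)
qed

lemma sends_mir_psi_square:
  assumes V: "valid_conf C" and psi: "oph psi" "sends psi C (md C)"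
  shows "oph (mir \<circ> psi \<circ> mir \<circ> psi)" "sends (mir \<circ> psi \<circ> mir \<circ> psi) C C"
proof -
  show "oph (mir \<circ> psi \<circ> mir \<circ> psi)"
    using oph_comp[OF psi(1) oph_mir_conj[OF psi(1)]] by (simp add: comp_assoc)
  have "img (mir \<circ> psi \<circ> mir \<circ> psi) X = img mir (img psi (img mir (img psi X)))" for X
    by (simp add: img_img comp_assoc)
  then show "sends (mir \<circ> psi \<circ> mir \<circ> psi) C C"
    by (simp add: sends_iff sends_md_img[OF V psi])
qed

lemma Fprime_Fprime:
  assumes V: "valid_conf C" and psi: "oph psi" "sends psi C (md C)"
    and N: "\<And>f. oph f \<Longrightarrow> sends f C C \<Longrightarrow> natural f C F F"
    and A: "A \<subseteq> circles C" and B: "B \<subseteq> ending C"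
  shows "Fprime C (Fprime C F psi) psi A B = F A B"
proof -
  let ?h = "mir \<circ> psi \<circ> mir \<circ> psi"
  have hX: "img ?h X = img mir (img psi (img mir (img psi X)))" for X
    by (simp add: img_img comp_assoc)
  have mpA: "img mir (img psi A) \<subseteq> ending C" and mpB: "img mir (img psi B) \<subseteq> circles C"
    using img_mono[OF img_mono[OF A, of psi], of mir] img_mono[OF img_mono[OF B, of psi], of mir]
    by (simp_all add: sends_md_img[OF V psi])
  have "img ?h A \<subseteq> circles C" "img ?h B \<subseteq> ending C"
    using img_mono[OF A, of ?h] img_mono[OF B, of ?h] sends_mir_psi_square(2)[OF V psi]
      ending_image[OF _ _ sends_mir_psi_square[OF V psi]] wf_conf_if_valid_conf[OF V]
    by (simp_all add: sends_iff)
  then have "Fprime C (Fprime C F psi) psi A B = F (img ?h A) (img ?h B)"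
    unfolding Fprime_apply mir_psi_complement(1)[OF V psi mpA] mir_psi_complement(2)[OF V psi mpB] hX
    by (simp add: double_diff)
  also have "\<dots> = F A B"
    using N[OF sends_mir_psi_square[OF V psi]] A B by (simp add: natural_def)
  finally show ?thesis .
qed

lemma Fprime_Ftilde:
  assumes V: "valid_conf C" and psi: "oph psi" "sends psi C (md C)"
    and N: "\<And>f. oph f \<Longrightarrow> sends f C C \<Longrightarrow> natural f C F F"
    and A: "A \<subseteq> circles C" and B: "B \<subseteq> ending C"
  shows "Fprime C (Ftilde C F psi) psi A B = Ftilde C F psi A B"
proof (cases "\<exists>A B. A \<subseteq> circles C \<and> B \<subseteq> ending C \<and> F A B \<noteq> Fprime C F psi A B")
  case True
  then have Ft: "Ftilde C F psi = (\<lambda>A B. F A B \<noteq> Fprime C F psi A B)"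
    unfolding Ftilde_def by (rule if_P)
  show ?thesis
    unfolding Ft Fprime_xor using Fprime_Fprime[OF V psi N A B] by auto
next
  case False
  then have Ft: "Ftilde C F psi = F"
    unfolding Ftilde_def by (rule if_not_P)
  show ?thesis
    unfolding Ft using False A B by blast
qed

lemma filtration_Ftilde:
  assumes V: "valid_conf C" and FC: "filtration C F" and psi: "oph psi" "sends psi C (md C)"
  shows "filtration C (Ftilde C F psi)"
proof -
  have W: "wf_conf C" "wf_conf (md C)"
    using wf_conf_if_valid_conf[OF V] wf_conf_md by blast+
  have "filtration C (Fprime C F psi)"
    unfolding Fprime_def by (rule filtration_transport[OF W(2,1) psi filtration_dualmap[OF V FC]])
  then show ?thesis
    using FC filtration_xor by (simp add: Ftilde_def)
qed

lemma natural_Ftilde: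
  assumes V: "valid_conf C" and psi: "oph psi" "sends psi C (md C)"
    and N: "\<And>f. oph f \<Longrightarrow> sends f C C \<Longrightarrow> natural f C F F"
    and f: "oph f" "sends f C C"
  shows "natural f C (Ftilde C F psi) (Ftilde C F psi)"
proof -
  have W: "wf_conf C" "wf_conf (md C)"
    using wf_conf_if_valid_conf[OF V] wf_conf_md by blast+
  have "natural f C (Fprime C F psi) (Fprime C F psi)"
    unfolding Fprime_def
    by (rule natural_transport[OF W(2) W(1) psi psi natural_dualmap[OF V N] f])
  then show ?thesis
    using N[OF f] natural_xor by (simp add: Ftilde_def)
qed

lemma duality_transport_inv_into:
  assumes V: "valid_conf C" and psi: "oph psi" "sends psi C (md C)"
    and fixed: "\<And>A B. A \<subseteq> circles C \<Longrightarrow> B \<subseteq> ending C \<Longrightarrow> Fprime C \<Phi> psi A B = \<Phi> A B"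
  shows "duality C \<Phi> (transport (inv_into S2 psi) \<Phi>)"
  unfolding duality_def transport_def
proof (intro allI impI)
  fix A B
  assume A: "A \<subseteq> circles C" and B: "B \<subseteq> ending C"
  define A1 B1 where "A1 = img (inv_into S2 psi) (img mir (ending C - B))"
    and "B1 = img (inv_into S2 psi) (img mir (circles C - A))"
  note W = wf_conf_if_valid_conf[OF V]
  have PC: "circles C \<subseteq> Pow S2" and PE: "ending C \<subseteq> Pow S2"
    using circles_subset_Pow_S2[OF W] ending_subset_Pow_S2 .
  have mir_Pow: "img mir X \<subseteq> Pow S2" if "X \<subseteq> Pow S2" for X
    using that by (intro img_subset_Pow_S2) simp_all
  have "A1 \<subseteq> img (inv_into S2 psi) (img psi (circles C))"
    unfolding A1_def sends_md_img[OF V psi] by (intro img_mono) auto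
  then have A1: "A1 \<subseteq> circles C"
    using img_inv_into_img[OF psi(1) PC] by simp
  have "B1 \<subseteq> img (inv_into S2 psi) (img psi (ending C))"
    unfolding B1_def sends_md_img[OF V psi] by (intro img_mono) auto
  then have B1: "B1 \<subseteq> ending C"
    using img_inv_into_img[OF psi(1) PE] by simp
  have "img psi A1 = img mir (ending C - B)" "img psi B1 = img mir (circles C - A)"
    unfolding A1_def B1_def using PC PE
    by (intro img_img_inv_into[OF psi(1)] mir_Pow; blast)+
  then have "\<Phi> A B = Fprime C \<Phi> psi A1 B1"
    unfolding Fprime_apply using A B by (simp add: double_diff)
  then show "\<Phi> A B = \<Phi> A1 B1"
    using fixed[OF A1 B1] by simp
qed

lemma duality_self_if_md_eq:
  assumes V: "valid_conf C" and md: "md C = C"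
    and d: "duality C \<Phi> (transport g \<Phi>)" and N: "natural g C \<Phi> \<Phi>"
  shows "duality C \<Phi> \<Phi>"
  unfolding duality_def
proof (intro allI impI)
  fix A B
  assume A: "A \<subseteq> circles C" and B: "B \<subseteq> ending C"
  have A': "img mir (ending C - B) \<subseteq> circles C"
    using img_mono[of "ending C - B" "ending C" mir] circles_md[of C] md by auto
  have B': "img mir (circles C - A) \<subseteq> ending C"
    using img_mono[of "circles C - A" "circles C" mir] ending_md[OF V] md by auto
  show "\<Phi> A B = \<Phi> (img mir (ending C - B)) (img mir (circles C - A))"
    using d[unfolded duality_def transport_def, rule_format, OF A B]
      N[unfolded natural_def, rule_format, OF A' B'] by simp
qed

lemma rules_pairI:
  assumes "md (md C) = C"
    and "filtration C \<Phi>" "filtration (md C) \<Psi>"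
    and "duality C \<Phi> \<Psi>" "duality (md C) \<Psi> \<Phi>" "md C = C \<Longrightarrow> duality C \<Phi> \<Phi>"
    and "\<And>f X Y. X \<in> {C, md C} \<Longrightarrow> Y \<in> {C, md C} \<Longrightarrow> oph f \<Longrightarrow> sends f X Y \<Longrightarrow>
           natural f X (if X = C then \<Phi> else \<Psi>) (if Y = C then \<Phi> else \<Psi>)"
  shows "rules {C, md C} (\<lambda>X. if X = C then \<Phi> else \<Psi>)"
  using assms unfolding rules_def by (cases "md C = C") auto

lemma rules_dualmap:
  assumes V: "valid_conf C" and FC: "filtration C F"
    and N: "\<And>f. oph f \<Longrightarrow> sends f C C \<Longrightarrow> natural f C F F"
    and no_iso: "\<nexists>psi. oph psi \<and> sends psi C (md C)"
  shows "rules {C, md C} (\<lambda>D. if D = C then F else dualmap C F)"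
proof (rule rules_pairI[OF md_md[OF V] FC filtration_dualmap[OF V FC] duality_dualmap
      duality_md_swap[OF V duality_dualmap]])
  have ne: "md C \<noteq> C"
    using no_iso oph_id sends_id by metis
  then show "md C = C \<Longrightarrow> duality C F F"
    by blast
  fix f X Y
  assume X: "X \<in> {C, md C}" and Y: "Y \<in> {C, md C}" and f: "oph f" "sends f X Y"
  have "\<not> (X = C \<and> Y = md C)"
    using f no_iso by blast
  moreover have "\<not> (X = md C \<and> Y = C)"
    using sends_inv_into[OF f(1) wf_conf_md[OF wf_conf_if_valid_conf[OF V]]] f oph_inv no_iso by blast
  ultimately show "natural f X (if X = C then F else dualmap C F) (if Y = C then F else dualmap C F)"
    using X Y f ne N natural_dualmap[OF V N] by auto
qed

lemma rules_Ftilde: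
  assumes V: "valid_conf C" and FC: "filtration C F"
    and N: "\<And>f. oph f \<Longrightarrow> sends f C C \<Longrightarrow> natural f C F F"
    and psi: "oph psi" "sends psi C (md C)"
  shows "rules {C, md C} (\<lambda>D. if D = C then Ftilde C F psi
                                 else transport (inv_into S2 psi) (Ftilde C F psi))"
proof -
  define Ft pi where "Ft = Ftilde C F psi" and "pi = inv_into S2 psi"
  have W: "wf_conf C" "wf_conf (md C)"
    using wf_conf_if_valid_conf[OF V] wf_conf_md by blast+
  have pi: "oph pi" "sends pi (md C) C"
    unfolding pi_def by (rule oph_inv[OF psi(1)], rule sends_inv_into[OF psi(1) W(1) psi(2)])
  have Nt: "natural f C Ft Ft" if "oph f" "sends f C C" for f
    unfolding Ft_def by (rule natural_Ftilde[OF V psi N that])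
  have d: "duality C Ft (transport pi Ft)"
    unfolding Ft_def pi_def by (rule duality_transport_inv_into[OF V psi Fprime_Ftilde[OF V psi N]])
  have "transport id Ft = Ft"
    by (simp add: transport_def fun_eq_iff)
  then have family: "(if X = C then Ft else transport pi Ft) = transport (if X = C then id else pi) Ft"
    for X
    by simp
  have "natural f X (if X = C then Ft else transport pi Ft) (if Y = C then Ft else transport pi Ft)"
    if "X \<in> {C, md C}" "Y \<in> {C, md C}" "oph f" "sends f X Y" for f X Y
    unfolding family using that W pi
    by (intro natural_transport[OF W(1) _ _ _ _ _ Nt]) (auto intro: oph_id sends_id)
  moreover have "md C = C \<Longrightarrow> duality C Ft Ft"
    using duality_self_if_md_eq[OF V _ d Nt[OF pi(1)]] pi(2) by simp
  moreover have "filtration C Ft"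
    unfolding Ft_def by (rule filtration_Ftilde[OF V FC psi])
  ultimately show ?thesis
    unfolding Ft_def[symmetric] pi_def[symmetric]
    by (intro rules_pairI[OF md_md[OF V] _ filtration_transport[OF W pi] d duality_md_swap[OF V d]])
qed

theorem lemma3p2:
  fixes C :: rconf and F :: coef
  assumes "valid_conf C"
    and "filtration C F"
    and "\<And>f. oph f \<Longrightarrow> sends f C C \<Longrightarrow> natural f C F F"
  shows "((\<nexists>psi. oph psi \<and> sends psi C (md C)) \<longrightarrow>
            rules {C, md C} (\<lambda>D. if D = C then F else dualmap C F)) \<and>
         (\<forall>psi. oph psi \<and> sends psi C (md C) \<longrightarrow>
            rules {C, md C} (\<lambda>D. if D = C then Ftilde C F psi
                                   else transport (inv_into S2 psi) (Ftilde C F psi)))"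
  using rules_dualmap[OF assms] rules_Ftilde[OF assms] by blast

end
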